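(* Let $\bar x$ be a sparsest solution of problem (P), and let $\tilde X$ be an optimal solution of the QBP program for some $\lambda\ge0$. Suppose that: - $\operatorname{rank}(\tilde X)=1$; - $B$ is $(\epsilon,2\|\tilde X\|_0)$-RIP-1 for some $\epsilon<1$. Then $\tilde X=\begin{bmatrix}1\\ \bar x\end{bmatrix}\begin{bmatrix}1 & \bar x^H\end{bmatrix}$.
   Context: Fix integers $n,N\ge 1$ and data $a_i\in\mathbb{C}$, $b_i,c_i\in\mathbb{C}^n$, $Q_i\in\mathbb{C}^{n\times n}$, $y_i\in\mathbb{C}$ for $i=1,\dots,N$. Problem (P) is $$\min_{x\in\mathbb{C}^n}\|x\|_0\quad\text{subject to}\quad y_i=a_i+b_i^H x+x^H c_i+x^H Q_i x,\quad i=1,\dots,N.$$ Here $\|\cdot\|_0$ counts nonzero entries of a vector or matrix, and ${}^H$ denotes conjugate transpose. Let $\Phi_i=\begin{bmatrix} a_i & b_i^H\\ c_i & Q_i\end{bmatrix}\in\mathbb{C}^{(n+1)\times(n+1)}$. Define the linear operator $B:\mathbb{C}^{(n+1)\times(n+1)}\to\mathbb{C}^N$ by $B(X)=(\operatorname{tr}(\Phi_i X))_{i=1}^N$. The QBP program with parameter $\lambda\ge0$ is $$\min_{X}\ \operatorname{tr}(X)+\lambda\|X\|_1\quad\text{subject to}\quad y_i=\operatorname{tr}(\Phi_i X)\ (i=1,\dots,N),\quad X_{1,1}=1,\quad X\succeq0,$$ where $X$ ranges over Hermitian $(n+1)\times(n+1)$ matrices and $\|\cdot\|_1$ is the sum of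 absolute values of the entries of a vector or matrix. $B$ is called $(\epsilon,k)$-RIP-1 if $\left|\frac{\|B(X)\|_1}{\|X\|_1}-1\right|<\epsilon$ for every nonzero $X$ with $\|X\|_0\le k$. *)

theory Defs
  imports "Jordan_Normal_Form.DL_Rank" "Jordan_Normal_Form.Conjugate"
begin

(* The (n+1)x(n+1) matrices use index 0 for the leading "1" slot, so that
   Phi_i = [[a_i, b_i^H],[c_i, Q_i]] has entry (0,0) = a_i, (0,k+1) = conj(b_i k),
   (j+1,0) = c_i j, (j+1,k+1) = Q_i (j,k). *)

definition mtrace :: "complex mat \<Rightarrow> complex" where
  "mtrace X = (\<Sum>j<dim_row X. X $$ (j, j))"

definition vnorm0 :: "complex vec \<Rightarrow> nat" where
  "vnorm0 x = card {j. j < dim_vec x \<and> x $ j \<noteq> 0}"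

definition mnorm0 :: "complex mat \<Rightarrow> nat" where
  "mnorm0 X = card {(j, k). j < dim_row X \<and> k < dim_col X \<and> X $$ (j, k) \<noteq> 0}"

definition mnorm1 :: "complex mat \<Rightarrow> real" where
  "mnorm1 X = (\<Sum>j<dim_row X. \<Sum>k<dim_col X. cmod (X $$ (j, k)))"

definition hermitian_mat :: "complex mat \<Rightarrow> bool" where
  "hermitian_mat X \<longleftrightarrow> dim_row X = dim_col X \<and>
     (\<forall>j < dim_row X. \<forall>k < dim_col X. X $$ (j, k) = cnj (X $$ (k, j)))"

definition psd_mat :: "complex mat \<Rightarrow> bool" where
  "psd_mat X \<longleftrightarrow> hermitian_mat X \<and>
     (\<forall>v \<in> carrier_vec (dim_row X). Re (conjugate v \<bullet> (X *\<^sub>v v)) \<ge> 0)"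

definition Phi :: "nat \<Rightarrow> complex \<Rightarrow> complex vec \<Rightarrow> complex vec \<Rightarrow> complex mat \<Rightarrow> complex mat" where
  "Phi n a b c Q = mat (n+1) (n+1) (\<lambda>(j, k).
      if j = 0 \<and> k = 0 then a
      else if j = 0 then cnj (b $ (k - 1))
      else if k = 0 then c $ (j - 1)
      else Q $$ (j - 1, k - 1))"

definition Bnorm1 :: "nat \<Rightarrow> nat \<Rightarrow> (nat \<Rightarrow> complex) \<Rightarrow> (nat \<Rightarrow> complex vec) \<Rightarrow> (nat \<Rightarrow> complex vec)
    \<Rightarrow> (nat \<Rightarrow> complex mat) \<Rightarrow> complex mat \<Rightarrow> real" where
  "Bnorm1 n N a b c Q X = (\<Sum>i<N. cmod (mtrace (Phi n (a i) (b i) (c i) (Q i) * X)))"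

definition RIP1 :: "nat \<Rightarrow> nat \<Rightarrow> (nat \<Rightarrow> complex) \<Rightarrow> (nat \<Rightarrow> complex vec) \<Rightarrow> (nat \<Rightarrow> complex vec)
    \<Rightarrow> (nat \<Rightarrow> complex mat) \<Rightarrow> real \<Rightarrow> nat \<Rightarrow> bool" where
  "RIP1 n N a b c Q eps k \<longleftrightarrow>
     (\<forall>X \<in> carrier_mat (n+1) (n+1). X \<noteq> 0\<^sub>m (n+1) (n+1) \<and> mnorm0 X \<le> k \<longrightarrow>
        \<bar>Bnorm1 n N a b c Q X / mnorm1 X - 1\<bar> < eps)"

definition P_feasible :: "nat \<Rightarrow> nat \<Rightarrow> (nat \<Rightarrow> complex) \<Rightarrow> (nat \<Rightarrow> complex vec) \<Rightarrow> (nat \<Rightarrow> complex vec)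
    \<Rightarrow> (nat \<Rightarrow> complex mat) \<Rightarrow> (nat \<Rightarrow> complex) \<Rightarrow> complex vec \<Rightarrow> bool" where
  "P_feasible n N a b c Q y x \<longleftrightarrow> x \<in> carrier_vec n \<and>
     (\<forall>i<N. y i = a i + conjugate (b i) \<bullet> x + conjugate x \<bullet> c i + conjugate x \<bullet> (Q i *\<^sub>v x))"

definition sparsest_solution :: "nat \<Rightarrow> nat \<Rightarrow> (nat \<Rightarrow> complex) \<Rightarrow> (nat \<Rightarrow> complex vec) \<Rightarrow> (nat \<Rightarrow> complex vec)
    \<Rightarrow> (nat \<Rightarrow> complex mat) \<Rightarrow> (nat \<Rightarrow> complex) \<Rightarrow> complex vec \<Rightarrow> bool" where
  "sparsest_solution n N a b c Q y x \<longleftrightarrow> P_feasible n N a b c Q y x \<and>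
     (\<forall>z. P_feasible n N a b c Q y z \<longrightarrow> vnorm0 x \<le> vnorm0 z)"

definition QBP_feasible :: "nat \<Rightarrow> nat \<Rightarrow> (nat \<Rightarrow> complex) \<Rightarrow> (nat \<Rightarrow> complex vec) \<Rightarrow> (nat \<Rightarrow> complex vec)
    \<Rightarrow> (nat \<Rightarrow> complex mat) \<Rightarrow> (nat \<Rightarrow> complex) \<Rightarrow> complex mat \<Rightarrow> bool" where
  "QBP_feasible n N a b c Q y X \<longleftrightarrow> X \<in> carrier_mat (n+1) (n+1) \<and> hermitian_mat X \<and>
     (\<forall>i<N. y i = mtrace (Phi n (a i) (b i) (c i) (Q i) * X)) \<and> X $$ (0, 0) = 1 \<and> psd_mat X"

(* objective tr(X) + lambda ||X||_1; tr(X) is real for Hermitian X *)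
definition QBP_obj :: "real \<Rightarrow> complex mat \<Rightarrow> real" where
  "QBP_obj lam X = Re (mtrace X) + lam * mnorm1 X"

definition QBP_optimal :: "nat \<Rightarrow> nat \<Rightarrow> (nat \<Rightarrow> complex) \<Rightarrow> (nat \<Rightarrow> complex vec) \<Rightarrow> (nat \<Rightarrow> complex vec)
    \<Rightarrow> (nat \<Rightarrow> complex mat) \<Rightarrow> (nat \<Rightarrow> complex) \<Rightarrow> real \<Rightarrow> complex mat \<Rightarrow> bool" where
  "QBP_optimal n N a b c Q y lam X \<longleftrightarrow> QBP_feasible n N a b c Q y X \<and>
     (\<forall>Z. QBP_feasible n N a b c Q y Z \<longrightarrow> QBP_obj lam X \<le> QBP_obj lam Z)"

definition lift_mat :: "complex vec \<Rightarrow> complex mat" where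
  "lift_mat x = (let v = vCons 1 x in
     mat (dim_vec v) (dim_vec v) (\<lambda>(j, k). v $ j * cnj (v $ k)))"

end

theory Submission imports Defs begin

text \<open>A Hermitian rank-one matrix with leading entry 1 is the lift of its first column, so
  the QBP optimum is the lift of a feasible point of (P), which is at least as dense as the
  sparsest solution. Hence the difference of the two lifts has at most twice as many nonzero
  entries as the optimum and lies in the kernel of the measurement operator, and RIP-1 with a
  constant at most 1 forces it to vanish.\<close>

lemma lift_mat_carrier: "x \<in> carrier_vec n \<Longrightarrow> lift_mat x \<in> carrier_mat (n+1) (n+1)"
  unfolding lift_mat_def Let_def by auto

lemma lift_mat_index:
  "x \<in> carrier_vec n \<Longrightarrow> j < n+1 \<Longrightarrow> k < n+1 \<Longrightarrow>
     lift_mat x $$ (j, k) = vCons 1 x $ j * cnj (vCons 1 x $ k)"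
  unfolding lift_mat_def Let_def by auto

lemma Phi_carrier: "Phi n a b c Q \<in> carrier_mat (n+1) (n+1)"
  by (simp add: Phi_def)

lemma mtrace_Phi_mult_lift_mat:
  assumes x: "x \<in> carrier_vec n" and b: "b \<in> carrier_vec n" and c: "c \<in> carrier_vec n"
    and Q: "Q \<in> carrier_mat n n"
  shows "mtrace (Phi n a b c Q * lift_mat x) =
     a + conjugate b \<bullet> x + conjugate x \<bullet> c + conjugate x \<bullet> (Q *\<^sub>v x)"
proof -
  let ?v = "vCons 1 x"
  have diag: "(Phi n a b c Q * lift_mat x) $$ (j, j) =
      (\<Sum>k<n+1. Phi n a b c Q $$ (j, k) * (?v $ k * cnj (?v $ j)))" if j: "j < n+1" for j
  proof -
    have "(Phi n a b c Q * lift_mat x) $$ (j, j) = row (Phi n a b c Q) j \<bullet> col (lift_mat x) j"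
      using j lift_mat_carrier[OF x] by (simp add: Phi_def)
    also have "\<dots> = (\<Sum>k\<in>{0..<n+1}. Phi n a b c Q $$ (j, k) * (?v $ k * cnj (?v $ j)))"
      unfolding scalar_prod_def using j lift_mat_carrier[OF x]
      by (intro sum.cong) (auto simp: Phi_def lift_mat_index[OF x])
    finally show ?thesis by (simp add: atLeast0LessThan)
  qed
  have "mtrace (Phi n a b c Q * lift_mat x) =
      (\<Sum>j<n+1. \<Sum>k<n+1. Phi n a b c Q $$ (j, k) * (?v $ k * cnj (?v $ j)))"
    unfolding mtrace_def using Phi_carrier[of n a b c Q] by (intro sum.cong) (simp_all add: diag)
  also have "\<dots> = a + (\<Sum>k<n. cnj (b $ k) * x $ k) + (\<Sum>j<n. c $ j * cnj (x $ j))
       + (\<Sum>j<n. \<Sum>k<n. Q $$ (j, k) * x $ k * cnj (x $ j))"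
    by (simp del: sum.lessThan_Suc add: sum.lessThan_Suc_shift Phi_def sum.distrib algebra_simps)
  also have "\<dots> = a + conjugate b \<bullet> x + conjugate x \<bullet> c + conjugate x \<bullet> (Q *\<^sub>v x)"
    using x b c Q by (simp add: scalar_prod_def sum_distrib_left algebra_simps atLeast0LessThan)
  finally show ?thesis .
qed

lemma P_feasible_iff_lift_mat_measurements:
  assumes "\<forall>i<N. b i \<in> carrier_vec n \<and> c i \<in> carrier_vec n \<and> Q i \<in> carrier_mat n n"
    and "x \<in> carrier_vec n"
  shows "P_feasible n N a b c Q y x \<longleftrightarrow>
     (\<forall>i<N. y i = mtrace (Phi n (a i) (b i) (c i) (Q i) * lift_mat x))"
  using assms mtrace_Phi_mult_lift_mat unfolding P_feasible_def by auto

lemma col_in_set_cols: "k < dim_col X \<Longrightarrow> col X k \<in> set (cols X)"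
  by (metis cols_length cols_nth nth_mem)

lemma (in vec_space) rank_one_col_multiple:
  assumes A: "A \<in> carrier_mat n nc" and r: "rank A = 1"
    and u: "u \<in> set (cols A)" "u \<noteq> 0\<^sub>v n" and w: "w \<in> set (cols A)"
  shows "\<exists>\<alpha>. w = \<alpha> \<cdot>\<^sub>v u"
proof (rule ccontr)
  assume no_multiple: "\<nexists>\<alpha>. w = \<alpha> \<cdot>\<^sub>v u"
  have uw: "u \<in> carrier_vec n" "w \<in> carrier_vec n" using u w A cols_dim by blast+
  have "w \<noteq> u" using no_multiple by (metis uw(1) one_smult_vec)
  have indpt_u: "lin_indpt ({} \<union> {u})"
    using lin_dep_iff_in_span[of "{}" u] span_empty u uw by (auto simp: lin_dep_def)
  have "w \<notin> span {u}"
  proof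
    assume "w \<in> span {u}"
    then obtain a where "lincomb a {u} = w" using finite_in_span[of "{u}" w] uw by auto
    hence "w = a u \<cdot>\<^sub>v u" unfolding lincomb_def using uw by auto
    thus False using no_multiple by blast
  qed
  hence "lin_indpt ({u} \<union> {w})"
    using lin_dep_iff_in_span[of "{u}" w] indpt_u uw \<open>w \<noteq> u\<close> by auto
  hence "card ({u} \<union> {w}) \<le> rank A"
    by (intro rank_ge_card_indpt[OF A]) (use u w in auto)
  thus False using \<open>w \<noteq> u\<close> r by auto
qed

lemma hermitian_rank_one_eq_lift_mat:
  fixes X :: "complex mat"
  assumes X: "X \<in> carrier_mat (n+1) (n+1)" and herm: "hermitian_mat X"
    and X00: "X $$ (0, 0) = 1" and rank: "vec_space.rank (n+1) X = 1"
  shows "X = lift_mat (vec n (\<lambda>j. X $$ (Suc j, 0)))"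
proof -
  define x where "x = vec n (\<lambda>j. X $$ (Suc j, 0))"
  have x: "x \<in> carrier_vec n" by (simp add: x_def)
  have first_col: "vCons 1 x $ j = X $$ (j, 0)" if "j < n+1" for j
    using that X00 by (cases j) (auto simp: x_def)
  have "col X 0 \<noteq> 0\<^sub>v (n+1)"
  proof
    assume "col X 0 = 0\<^sub>v (n+1)"
    hence "col X 0 $ 0 = 0" by simp
    thus False using X X00 by simp
  qed
  hence col0: "col X 0 \<in> set (cols X)" "col X 0 \<noteq> 0\<^sub>v (n+1)"
    using X col_in_set_cols[of 0 X] by auto
  have entry: "X $$ (j, k) = X $$ (j, 0) * cnj (X $$ (k, 0))" if j: "j < n+1" and k: "k < n+1" for j k
  proof -
    have "col X k \<in> set (cols X)" using X k by (intro col_in_set_cols) auto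
    then obtain \<alpha> where multiple: "col X k = \<alpha> \<cdot>\<^sub>v col X 0"
      using vec_space.rank_one_col_multiple[OF X rank col0] by blast
    have scaled: "X $$ (i, k) = \<alpha> * X $$ (i, 0)" if i: "i < n+1" for i
    proof -
      have "col X k $ i = (\<alpha> \<cdot>\<^sub>v col X 0) $ i" using multiple by simp
      thus ?thesis using i k X by simp
    qed
    have "\<alpha> = X $$ (0, k)" using scaled[of 0] X00 by simp
    also have "\<dots> = cnj (X $$ (k, 0))"
    proof -
      have "0 < dim_row X" "k < dim_col X" using X k by auto
      thus ?thesis using herm unfolding hermitian_mat_def by blast
    qed
    finally show ?thesis using scaled[OF j] by simp
  qed
  show ?thesis
    unfolding x_def[symmetric]
  proof (rule eq_matI)
    fix j k assume "j < dim_row (lift_mat x)" and "k < dim_col (lift_mat x)"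
    hence jk: "j < n+1" "k < n+1" using lift_mat_carrier[OF x] by auto
    show "X $$ (j, k) = lift_mat x $$ (j, k)"
      unfolding lift_mat_index[OF x jk] first_col[OF jk(1)] first_col[OF jk(2)] by (rule entry[OF jk])
  qed (use X lift_mat_carrier[OF x] in auto)
qed

lemma mnorm0_lift_mat:
  assumes x: "x \<in> carrier_vec n"
  shows "mnorm0 (lift_mat x) = (1 + vnorm0 x)^2"
proof -
  define S where "S = {j. j < n+1 \<and> vCons 1 x $ j \<noteq> 0}"
  have "{(j, k). j < dim_row (lift_mat x) \<and> k < dim_col (lift_mat x) \<and> lift_mat x $$ (j, k) \<noteq> 0}
      = S \<times> S"
    using lift_mat_carrier[OF x] by (auto simp: S_def lift_mat_index[OF x])
  hence "mnorm0 (lift_mat x) = card S * card S"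
    unfolding mnorm0_def by (simp add: card_cartesian_product)
  moreover have "S = insert 0 (Suc ` {j. j < dim_vec x \<and> x $ j \<noteq> 0})"
    using x by (auto simp: S_def less_Suc_eq_0_disj)
  hence "card S = 1 + vnorm0 x" unfolding vnorm0_def by (simp add: card_image)
  ultimately show ?thesis by (simp add: power2_eq_square)
qed

lemma mnorm0_minus_le:
  assumes A: "A \<in> carrier_mat m m" and B: "B \<in> carrier_mat m m"
  shows "mnorm0 (A - B) \<le> mnorm0 A + mnorm0 B"
proof -
  let ?S = "\<lambda>M. {(j, k). j < m \<and> k < m \<and> M $$ (j, k) \<noteq> 0}"
  have mnorm0_eq: "mnorm0 M = card (?S M)" if "M \<in> carrier_mat m m" for M
    using that unfolding mnorm0_def by auto
  have fin: "finite (?S M)" for M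
    by (rule finite_subset[of _ "{..<m} \<times> {..<m}"]) auto
  have "card (?S (A - B)) \<le> card (?S A \<union> ?S B)"
    using A B fin by (intro card_mono) auto
  also have "\<dots> \<le> card (?S A) + card (?S B)" by (rule card_Un_le)
  finally show ?thesis using A B minus_carrier_mat[OF B, of A] by (simp add: mnorm0_eq)
qed

lemma Bnorm1_minus_eq_0:
  assumes X: "X \<in> carrier_mat (n+1) (n+1)" and Y: "Y \<in> carrier_mat (n+1) (n+1)"
    and same: "\<forall>i<N. mtrace (Phi n (a i) (b i) (c i) (Q i) * X)
                   = mtrace (Phi n (a i) (b i) (c i) (Q i) * Y)"
  shows "Bnorm1 n N a b c Q (X - Y) = 0"
proof -
  have "mtrace (P * (X - Y)) = mtrace (P * X) - mtrace (P * Y)"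
    if P: "P \<in> carrier_mat (n+1) (n+1)" for P
    using mult_minus_distrib_mat[OF P X Y] P X Y unfolding mtrace_def by (simp add: sum_subtractf)
  thus ?thesis unfolding Bnorm1_def using same Phi_carrier by (intro sum.neutral) auto
qed

text \<open>A nonzero sparse matrix in the kernel of B would have RIP-1 ratio 0, at distance 1 from 1.\<close>

lemma RIP1_unique:
  assumes rip: "RIP1 n N a b c Q eps k" and eps: "eps \<le> 1"
    and X: "X \<in> carrier_mat (n+1) (n+1)" and Y: "Y \<in> carrier_mat (n+1) (n+1)"
    and same: "\<forall>i<N. mtrace (Phi n (a i) (b i) (c i) (Q i) * X)
                   = mtrace (Phi n (a i) (b i) (c i) (Q i) * Y)"
    and sparse: "mnorm0 X + mnorm0 Y \<le> k"
  shows "X = Y"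
proof -
  have diff: "X - Y = 0\<^sub>m (n+1) (n+1)"
  proof (rule ccontr)
    assume "X - Y \<noteq> 0\<^sub>m (n+1) (n+1)"
    moreover have "mnorm0 (X - Y) \<le> k" using mnorm0_minus_le[OF X Y] sparse by linarith
    ultimately have "\<bar>Bnorm1 n N a b c Q (X - Y) / mnorm1 (X - Y) - 1\<bar> < eps"
      using rip minus_carrier_mat[OF Y, of X] unfolding RIP1_def by blast
    thus False using Bnorm1_minus_eq_0[OF X Y same] eps by simp
  qed
  show ?thesis
  proof (rule eq_matI)
    fix j k assume jk: "j < dim_row Y" "k < dim_col Y"
    hence "(X - Y) $$ (j, k) = 0" using diff Y by simp
    thus "X $$ (j, k) = Y $$ (j, k)" using jk X Y by simp
  qed (use X Y in auto)
qed

theorem mainTheorem4: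
  fixes n N :: nat
    and a :: "nat \<Rightarrow> complex" and b c :: "nat \<Rightarrow> complex vec"
    and Q :: "nat \<Rightarrow> complex mat" and y :: "nat \<Rightarrow> complex"
    and xbar :: "complex vec" and Xt :: "complex mat" and lam :: real
  assumes "n \<ge> 1" and "N \<ge> 1"
    and "\<forall>i<N. b i \<in> carrier_vec n \<and> c i \<in> carrier_vec n \<and> Q i \<in> carrier_mat n n"
    and "sparsest_solution n N a b c Q y xbar"
    and "lam \<ge> 0"
    and "QBP_optimal n N a b c Q y lam Xt"
    and "vec_space.rank (n+1) Xt = 1"
    and "\<exists>eps<1. RIP1 n N a b c Q eps (2 * mnorm0 Xt)"
  shows "Xt = lift_mat xbar"
proof -
  note dims = assms(3)
  have Xt: "Xt \<in> carrier_mat (n+1) (n+1)" "hermitian_mat Xt" "Xt $$ (0, 0) = 1"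
    and Xt_meas: "\<forall>i<N. y i = mtrace (Phi n (a i) (b i) (c i) (Q i) * Xt)"
    using assms(6) unfolding QBP_optimal_def QBP_feasible_def by blast+
  define xt where "xt = vec n (\<lambda>j. Xt $$ (Suc j, 0))"
  have xt: "xt \<in> carrier_vec n" by (simp add: xt_def)
  have Xt_lift: "Xt = lift_mat xt"
    unfolding xt_def using hermitian_rank_one_eq_lift_mat Xt assms(7) by blast
  have "P_feasible n N a b c Q y xt"
    using P_feasible_iff_lift_mat_measurements[OF dims xt] Xt_meas Xt_lift by simp
  hence xbar: "P_feasible n N a b c Q y xbar" and "vnorm0 xbar \<le> vnorm0 xt"
    using assms(4) unfolding sparsest_solution_def by blast+
  have xbar_carrier: "xbar \<in> carrier_vec n" using xbar unfolding P_feasible_def by blast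
  have "mnorm0 (lift_mat xbar) \<le> mnorm0 Xt"
    using \<open>vnorm0 xbar \<le> vnorm0 xt\<close> unfolding Xt_lift
    by (simp add: mnorm0_lift_mat[OF xt] mnorm0_lift_mat[OF xbar_carrier] power_mono)
  obtain eps where "eps < 1" "RIP1 n N a b c Q eps (2 * mnorm0 Xt)" using assms(8) by blast
  show ?thesis
  proof (rule RIP1_unique)
    show "\<forall>i<N. mtrace (Phi n (a i) (b i) (c i) (Q i) * Xt)
              = mtrace (Phi n (a i) (b i) (c i) (Q i) * lift_mat xbar)"
      using P_feasible_iff_lift_mat_measurements[OF dims xbar_carrier] xbar Xt_meas by simp
  qed (use \<open>eps < 1\<close> \<open>RIP1 n N a b c Q eps (2 * mnorm0 Xt)\<close> Xt(1)
         lift_mat_carrier[OF xbar_carrier] \<open>mnorm0 (lift_mat xbar) \<le> mnorm0 Xt\<close> in auto)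
qed

end
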